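(* For $i\in\mathbb{Z}_{>0}$ and $\epsilon>0$, the inclusion $j:S^n\times S^n\times\{i\pi+\epsilon\}\to Z_i$ is a homotopy equivalence.
   Context: $S^n$ ($n\ge1$) carries the round metric induced from $\mathbb{R}^{n+1}$, with geodesic distance $\mathrm{dist}$. For $i\in\mathbb{Z}_{>0}$, $Z_i\subset S^n\times S^n\times\mathbb{R}$ is the open set $\{(x,y,t)\mid\mathrm{dist}(x,y)<t-(i-1)\pi\}$ if $i$ is odd and $\{(x,y,t)\mid\mathrm{dist}(x,-y)<t-(i-1)\pi\}$ if $i$ is even. *)

theory Defs
  imports "HOL-Analysis.Analysis"
begin

text \<open>A continuous map f from X to Y is a homotopy equivalence if it has a continuous
  homotopy inverse g (same shape as the library's homotopy_equivalent_space, but for the given f).\<close>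
definition homotopy_equivalence_map ::
  "'a topology \<Rightarrow> 'b topology \<Rightarrow> ('a \<Rightarrow> 'b) \<Rightarrow> bool" where
  "homotopy_equivalence_map X Y f \<longleftrightarrow>
     continuous_map X Y f \<and>
     (\<exists>g. continuous_map Y X g \<and>
          homotopic_with (\<lambda>x. True) X X (g \<circ> f) id \<and>
          homotopic_with (\<lambda>x. True) Y Y (f \<circ> g) id)"

definition sphdist :: "'a::real_inner \<Rightarrow> 'a \<Rightarrow> real" where
  "sphdist x y = arccos (inner x y)"

text \<open>The open sets Z_i in S^n x S^n x R, where S^n = sphere 0 1 in real^'m, n+1 = CARD('m).\<close>
definition Zset :: "nat \<Rightarrow> ((real^'m) \<times> (real^'m) \<times> real) set" where
  "Zset i = {(x, y, t). x \<in> sphere 0 1 \<and> y \<in> sphere 0 1 \<and>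
      (if odd i then sphdist x y else sphdist x (- y)) < t - (real i - 1) * pi}"

end

theory Submission
  imports Defs
begin

text \<open>The geodesic distance on the sphere never exceeds \<open>\<pi>\<close>, so the slice \<open>t = i\<pi> + \<epsilon>\<close> lies
  in \<open>Z\<^sub>i\<close>. Over each point \<open>(x, y)\<close> the fibre of \<open>Z\<^sub>i\<close> is an open half-line in \<open>t\<close>, so the
  straight-line homotopy moving \<open>t\<close> to \<open>i\<pi> + \<epsilon>\<close> stays inside \<open>Z\<^sub>i\<close> and deformation retracts
  \<open>Z\<^sub>i\<close> onto the slice.\<close>

lemma homotopy_equivalence_map_inclusion_linear_retract:
  fixes S T :: "'a::real_normed_vector set"
  assumes "S \<subseteq> T" and contr: "continuous_on T r" and "r ` T \<subseteq> S"
    and r_id: "\<And>x. x \<in> S \<Longrightarrow> r x = x"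
    and segment: "\<And>x. x \<in> T \<Longrightarrow> closed_segment (r x) x \<subseteq> T"
  shows "homotopy_equivalence_map (top_of_set S) (top_of_set T) (\<lambda>x. x)"
proof -
  have incl: "continuous_map (top_of_set S) (top_of_set T) (\<lambda>x. x)"
    using \<open>S \<subseteq> T\<close> by (auto simp: continuous_map_in_subtopology continuous_on_id)
  have retr: "continuous_map (top_of_set T) (top_of_set S) r"
    using contr \<open>r ` T \<subseteq> S\<close> by (auto simp: continuous_map_in_subtopology)
  have "homotopic_with (\<lambda>x. True) (top_of_set S) (top_of_set S) (r \<circ> (\<lambda>x. x)) id"
    using continuous_map_compose[OF incl retr] r_id by (intro homotopic_with_equal) auto
  moreover have "homotopic_with (\<lambda>x. True) (top_of_set T) (top_of_set T) ((\<lambda>x. x) \<circ> r) id"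
    using segment by (simp add: o_def homotopic_with_linear contr continuous_on_id)
  ultimately show ?thesis
    unfolding homotopy_equivalence_map_def using incl retr by blast
qed

lemma sphdist_le_pi:
  fixes x y :: "'a::real_inner"
  assumes "norm x = 1" "norm y = 1"
  shows "sphdist x y \<le> pi"
proof -
  have "\<bar>inner x y\<bar> \<le> 1" using Cauchy_Schwarz_ineq2[of x y] assms by simp
  then show ?thesis unfolding sphdist_def by (intro arccos_ubound) auto
qed

lemma sphere_times_sphere_slice_subset_Zset:
  assumes "real i * pi < c"
  shows "sphere 0 1 \<times> sphere 0 1 \<times> {c} \<subseteq> (Zset i :: ((real^'m) \<times> (real^'m) \<times> real) set)"
proof clarify
  fix x y :: "real^'m"
  assume "x \<in> sphere 0 1" "y \<in> sphere 0 1"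
  then have "sphdist x y \<le> pi" "sphdist x (- y) \<le> pi"
    by (simp_all add: sphdist_le_pi)
  moreover have "pi < c - (real i - 1) * pi" using assms by (simp add: algebra_simps)
  ultimately show "(x, y, c) \<in> Zset i"
    using \<open>x \<in> sphere 0 1\<close> \<open>y \<in> sphere 0 1\<close> unfolding Zset_def by auto
qed

lemma Zset_mono_time:
  assumes "(x, y, a) \<in> Zset i" and "a \<le> b"
  shows "(x, y, b) \<in> Zset i"
  using assms unfolding Zset_def by auto

lemma closed_segment_in_Zset_fibre:
  assumes "(x, y, a) \<in> Zset i" and "(x, y, b) \<in> Zset i"
  shows "closed_segment (x, y, a) (x, y, b) \<subseteq> Zset i"
proof
  fix q assume "q \<in> closed_segment (x, y, a) (x, y, b)"
  then obtain s where "q = (x, y, s)" and "s \<in> closed_segment a b"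
    by (cases q) (auto dest!: closed_segment_PairD)
  then have "min a b \<le> s" by (auto simp: closed_segment_eq_real_ivl split: if_splits)
  moreover have "(x, y, min a b) \<in> Zset i" using assms by (simp add: min_def)
  ultimately show "q \<in> Zset i" using \<open>q = (x, y, s)\<close> Zset_mono_time by blast
qed

theorem lemma3p1:
  fixes i :: nat and \<epsilon> :: real
  assumes "CARD('m::finite) \<ge> 2"
    and "i > 0" and "\<epsilon> > 0"
  shows "homotopy_equivalence_map
           (top_of_set (sphere (0::real^'m) 1 \<times> sphere (0::real^'m) 1 \<times> {real i * pi + \<epsilon>}))
           (top_of_set (Zset i :: ((real^'m) \<times> (real^'m) \<times> real) set))
           (\<lambda>p. p)"
proof (rule homotopy_equivalence_map_inclusion_linear_retract)
  let ?c = "real i * pi + \<epsilon>"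
  let ?r = "\<lambda>(x, y, t). (x, y, ?c) :: (real^'m) \<times> (real^'m) \<times> real"
  show slice: "sphere 0 1 \<times> sphere 0 1 \<times> {?c} \<subseteq> Zset i"
    using \<open>\<epsilon> > 0\<close> by (intro sphere_times_sphere_slice_subset_Zset) simp
  show "continuous_on (Zset i) ?r"
    by (simp add: case_prod_beta' continuous_intros)
  show "?r ` Zset i \<subseteq> sphere 0 1 \<times> sphere 0 1 \<times> {?c}"
    unfolding Zset_def by auto
  show "\<And>p. p \<in> sphere 0 1 \<times> sphere 0 1 \<times> {?c} \<Longrightarrow> ?r p = p"
    by auto
  show "closed_segment (?r p) p \<subseteq> Zset i" if "p \<in> Zset i" for p
  proof -
    obtain x y t where p: "p = (x, y, t)" by (cases p)
    have "x \<in> sphere 0 1" "y \<in> sphere 0 1" using that p unfolding Zset_def by auto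
    then have "(x, y, ?c) \<in> Zset i" using slice by blast
    then show ?thesis using that p by (simp add: closed_segment_in_Zset_fibre)
  qed
qed

end
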